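(* Let $\mathcal B$ be a category with small hom-sets and let $|\text{-}|:\mathcal E\to\mathcal B$ be a concrete category over $\mathcal B$. Then $\mathcal E$ is topological over $\mathcal B$ if and only if the $\mathcal Q_{\mathcal B}$-category $\overline{\mathcal E}$ is total, i.e. the Yoneda $\mathcal Q_{\mathcal B}$-functor $\mathsf Y_{\overline{\mathcal E}}:\overline{\mathcal E}\to\mathsf P\overline{\mathcal E}$ has a left adjoint (equivalently, every presheaf on $\overline{\mathcal E}$ has a supremum).
   Context: A concrete category over $\mathcal B$ is a category $\mathcal E$ with a faithful functor $|\text{-}|:\mathcal E\to\mathcal B$; a map $f:|X|\to|Y|$ in $\mathcal B$ is an $\mathcal E$-morphism if $f=|f'|$ for some $f':X\to Y$ in $\mathcal E$. A structured sink over $T\in\mathrm{ob}\,\mathcal B$ is a (possibly large) family of objects $X_i$ of $\mathcal E$ with maps $f_i:|X_i|\to T$ ($i\in I$); a final lifting is an object $Y$ with $|Y|=T$ such that every $f_i$ is an $\mathcal E$-morphism $X_i\to Y$ and every map $g:T\to|Z|$ is an $\mathcal E$-morphism $Y\to Z$ as soon as all $g\circ f_i$ are $\mathcal E$-morphisms $X_i\to Z$. $\mathcal E$ is topological if every structured sink has a final lifting. A quantaloid is a category whose hom-sets are complete lattices such that composition preserves arbitrary joins in each variable. For $u:S\to T$, $w:S\to U$, define $w\swarrow u:T\to U$ by $v\le w\swarrow u\iff v\circ u\le w$. The free quantaloid $\mathcal Q_{\mathcal B}$ has the objects of $\mathcal B$, $\mathcal Q_{\mathcal B}(S,T)=\{\mathbf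 f\mid \mathbf f\subseteq\mathcal B(S,T)\}$ ordered by inclusion, composition $\mathbf g\circ\mathbf f=\{g\circ f\mid f\in\mathbf f,g\in\mathbf g\}$ and identities $\{1_S\}$. For a quantaloid $\mathcal Q$, a $\mathcal Q$-category $\mathcal E$ consists of a class of objects, an extent $|X|\in\mathrm{ob}\,\mathcal Q$ for each object, and arrows $\mathcal E(X,Y)\in\mathcal Q(|X|,|Y|)$ with $1_{|X|}\le\mathcal E(X,X)$ and $\mathcal E(Y,Z)\circ\mathcal E(X,Y)\le\mathcal E(X,Z)$; a $\mathcal Q$-functor $F:\mathcal E\to\mathcal D$ is an object map with $|FX|=|X|$ and $\mathcal E(X,Y)\le\mathcal D(FX,FY)$; $F\dashv G$ means $\mathcal D(FX,Y)=\mathcal E(X,GY)$ for all $X,Y$. $\overline{\mathcal E}$ is the $\mathcal Q_{\mathcal B}$-category with the objects of $\mathcal E$, extents $|X|$, and $\overline{\mathcal E}(X,Y)$ the set of $\mathcal E$-morphisms $|X|\to|Y|$. A presheaf $\varphi$ of extent $T$ on a $\mathcal Q$-category $\mathcal E$ is a family $\varphi_X:|X|\to T$ ($X\in\mathrm{ob}\,\mathcal E$) with $\varphi_X\circ\mathcal E(X',X)\le\varphi_{X'}$; they form the $\mathcal Q$-category $\mathsf P\mathcal E$ with $|\varphi|=T$ and $\mathsf P\mathcal E(\varphi,\psi)=\bigwedge_X\psi_X\swarrow\varphi_X$. The Yoneda functor is $\mathsf Y_{\mathcal E}Z=\mathcal E(-,Z)$. A supremum of $\varphi$ is an object $Y$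 with $|Y|=|\varphi|$ and $\mathcal E(Y,Z)=\bigwedge_X\mathcal E(X,Z)\swarrow\varphi_X$ for all objects $Z$. *)

theory Defs
  imports Main
begin

section \<open>Categories (hom-sets are sets, hence small)\<close>

record ('o, 'a) cat =
  Obj  :: "'o set"
  Arr  :: "'a set"
  Dom  :: "'a \<Rightarrow> 'o"
  Cod  :: "'a \<Rightarrow> 'o"
  Idt  :: "'o \<Rightarrow> 'a"
  Comp :: "'a \<Rightarrow> 'a \<Rightarrow> 'a"   (* Comp C g f = g \<circ> f *)

definition hom :: "('o, 'a) cat \<Rightarrow> 'o \<Rightarrow> 'o \<Rightarrow> 'a set" where
  "hom C A B = {f \<in> Arr C. Dom C f = A \<and> Cod C f = B}"

definition category :: "('o, 'a) cat \<Rightarrow> bool" where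
  "category C \<longleftrightarrow>
     (\<forall>f \<in> Arr C. Dom C f \<in> Obj C \<and> Cod C f \<in> Obj C) \<and>
     (\<forall>A \<in> Obj C. Idt C A \<in> hom C A A) \<and>
     (\<forall>f \<in> Arr C. \<forall>g \<in> Arr C. Cod C f = Dom C g \<longrightarrow>
         Comp C g f \<in> hom C (Dom C f) (Cod C g)) \<and>
     (\<forall>f \<in> Arr C. Comp C f (Idt C (Dom C f)) = f \<and> Comp C (Idt C (Cod C f)) f = f) \<and>
     (\<forall>f \<in> Arr C. \<forall>g \<in> Arr C. \<forall>h \<in> Arr C. Cod C f = Dom C g \<longrightarrow> Cod C g = Dom C h \<longrightarrow>
         Comp C h (Comp C g f) = Comp C (Comp C h g) f)"

definition "functor" :: "('o, 'a) cat \<Rightarrow> ('p, 'b) cat \<Rightarrow> ('o \<Rightarrow> 'p) \<Rightarrow> ('a \<Rightarrow> 'b) \<Rightarrow> bool" where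
  "functor C D Fo Fa \<longleftrightarrow>
     (\<forall>A \<in> Obj C. Fo A \<in> Obj D) \<and>
     (\<forall>f \<in> Arr C. Fa f \<in> hom D (Fo (Dom C f)) (Fo (Cod C f))) \<and>
     (\<forall>A \<in> Obj C. Fa (Idt C A) = Idt D (Fo A)) \<and>
     (\<forall>f \<in> Arr C. \<forall>g \<in> Arr C. Cod C f = Dom C g \<longrightarrow> Fa (Comp C g f) = Comp D (Fa g) (Fa f))"

definition faithful :: "('o, 'a) cat \<Rightarrow> ('a \<Rightarrow> 'b) \<Rightarrow> bool" where
  "faithful C Fa \<longleftrightarrow> (\<forall>A \<in> Obj C. \<forall>B \<in> Obj C. inj_on Fa (hom C A B))"

definition concrete :: "('o, 'b) cat \<Rightarrow> ('x, 'e) cat \<Rightarrow> ('x \<Rightarrow> 'o) \<Rightarrow> ('e \<Rightarrow> 'b) \<Rightarrow> bool" where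
  "concrete B E Fo Fa \<longleftrightarrow> category B \<and> category E \<and> functor E B Fo Fa \<and> faithful E Fa"

definition emor :: "('o, 'b) cat \<Rightarrow> ('x, 'e) cat \<Rightarrow> ('x \<Rightarrow> 'o) \<Rightarrow> ('e \<Rightarrow> 'b) \<Rightarrow> 'x \<Rightarrow> 'x \<Rightarrow> 'b \<Rightarrow> bool" where
  "emor B E Fo Fa X Y f \<longleftrightarrow> f \<in> hom B (Fo X) (Fo Y) \<and> (\<exists>f' \<in> hom E X Y. Fa f' = f)"

definition structured_sink :: "('o, 'b) cat \<Rightarrow> ('x, 'e) cat \<Rightarrow> ('x \<Rightarrow> 'o) \<Rightarrow> 'o \<Rightarrow> ('x \<times> 'b) set \<Rightarrow> bool" where
  "structured_sink B E Fo T S \<longleftrightarrow> (\<forall>(X, f) \<in> S. X \<in> Obj E \<and> f \<in> hom B (Fo X) T)"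

definition final_lifting ::
  "('o, 'b) cat \<Rightarrow> ('x, 'e) cat \<Rightarrow> ('x \<Rightarrow> 'o) \<Rightarrow> ('e \<Rightarrow> 'b) \<Rightarrow> 'o \<Rightarrow> ('x \<times> 'b) set \<Rightarrow> 'x \<Rightarrow> bool" where
  "final_lifting B E Fo Fa T S Y \<longleftrightarrow>
     Y \<in> Obj E \<and> Fo Y = T \<and>
     (\<forall>(X, f) \<in> S. emor B E Fo Fa X Y f) \<and>
     (\<forall>Z \<in> Obj E. \<forall>g \<in> hom B T (Fo Z).
        (\<forall>(X, f) \<in> S. emor B E Fo Fa X Z (Comp B g f)) \<longrightarrow> emor B E Fo Fa Y Z g)"

definition topological :: "('o, 'b) cat \<Rightarrow> ('x, 'e) cat \<Rightarrow> ('x \<Rightarrow> 'o) \<Rightarrow> ('e \<Rightarrow> 'b) \<Rightarrow> bool" where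
  "topological B E Fo Fa \<longleftrightarrow>
     (\<forall>T \<in> Obj B. \<forall>S. structured_sink B E Fo T S \<longrightarrow> (\<exists>Y. final_lifting B E Fo Fa T S Y))"

definition qcomp :: "('o, 'b) cat \<Rightarrow> 'b set \<Rightarrow> 'b set \<Rightarrow> 'b set" where
  "qcomp B g f = {Comp B g' f' | g' f'. g' \<in> g \<and> f' \<in> f}"

text \<open>Right residual w \<swarrow> u : T \<rightarrow> U in Q_B (for u : S \<rightarrow> T, w : S \<rightarrow> U): largest v \<subseteq> B(T,U) with v \<circ> u \<subseteq> w.\<close>
definition qresid :: "('o, 'b) cat \<Rightarrow> 'b set \<Rightarrow> 'b set \<Rightarrow> 'o \<Rightarrow> 'o \<Rightarrow> 'b set" where
  "qresid B w u T U = {v \<in> hom B T U. \<forall>f \<in> u. Comp B v f \<in> w}"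

record ('c, 'o, 'b) qcat =
  qob  :: "'c set"
  qext :: "'c \<Rightarrow> 'o"
  qhom :: "'c \<Rightarrow> 'c \<Rightarrow> 'b set"

definition is_qcat :: "('o, 'b) cat \<Rightarrow> ('c, 'o, 'b) qcat \<Rightarrow> bool" where
  "is_qcat B C \<longleftrightarrow>
     (\<forall>X \<in> qob C. qext C X \<in> Obj B) \<and>
     (\<forall>X \<in> qob C. \<forall>Y \<in> qob C. qhom C X Y \<subseteq> hom B (qext C X) (qext C Y)) \<and>
     (\<forall>X \<in> qob C. {Idt B (qext C X)} \<subseteq> qhom C X X) \<and>
     (\<forall>X \<in> qob C. \<forall>Y \<in> qob C. \<forall>Z \<in> qob C. qcomp B (qhom C Y Z) (qhom C X Y) \<subseteq> qhom C X Z)"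

definition qfunctor :: "('c, 'o, 'b) qcat \<Rightarrow> ('d, 'o, 'b) qcat \<Rightarrow> ('c \<Rightarrow> 'd) \<Rightarrow> bool" where
  "qfunctor C D F \<longleftrightarrow>
     (\<forall>X \<in> qob C. F X \<in> qob D \<and> qext D (F X) = qext C X) \<and>
     (\<forall>X \<in> qob C. \<forall>Y \<in> qob C. qhom C X Y \<subseteq> qhom D (F X) (F Y))"

definition qadjoint :: "('c, 'o, 'b) qcat \<Rightarrow> ('d, 'o, 'b) qcat \<Rightarrow> ('c \<Rightarrow> 'd) \<Rightarrow> ('d \<Rightarrow> 'c) \<Rightarrow> bool" where
  "qadjoint C D F G \<longleftrightarrow> qfunctor C D F \<and> qfunctor D C G \<and>
     (\<forall>X \<in> qob C. \<forall>Y \<in> qob D. qhom D (F X) Y = qhom C X (G Y))"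

definition Ebar :: "('o, 'b) cat \<Rightarrow> ('x, 'e) cat \<Rightarrow> ('x \<Rightarrow> 'o) \<Rightarrow> ('e \<Rightarrow> 'b) \<Rightarrow> ('x, 'o, 'b) qcat" where
  "Ebar B E Fo Fa = \<lparr>qob = Obj E, qext = Fo, qhom = (\<lambda>X Y. {f. emor B E Fo Fa X Y f})\<rparr>"

definition presheaf :: "('o, 'b) cat \<Rightarrow> ('c, 'o, 'b) qcat \<Rightarrow> 'o \<Rightarrow> ('c \<Rightarrow> 'b set) \<Rightarrow> bool" where
  "presheaf B C T \<phi> \<longleftrightarrow> T \<in> Obj B \<and>
     (\<forall>X \<in> qob C. \<phi> X \<subseteq> hom B (qext C X) T) \<and>
     (\<forall>X. X \<notin> qob C \<longrightarrow> \<phi> X = {}) \<and>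
     (\<forall>X \<in> qob C. \<forall>X' \<in> qob C. qcomp B (\<phi> X) (qhom C X' X) \<subseteq> \<phi> X')"

definition Psh :: "('o, 'b) cat \<Rightarrow> ('c, 'o, 'b) qcat \<Rightarrow> ('o \<times> ('c \<Rightarrow> 'b set), 'o, 'b) qcat" where
  "Psh B C = \<lparr>qob = {(T, \<phi>). presheaf B C T \<phi>}, qext = fst,
     qhom = (\<lambda>(T, \<phi>) (U, \<psi>). hom B T U \<inter> (\<Inter>X \<in> qob C. qresid B (\<psi> X) (\<phi> X) T U))\<rparr>"

definition yoneda :: "('c, 'o, 'b) qcat \<Rightarrow> 'c \<Rightarrow> 'o \<times> ('c \<Rightarrow> 'b set)" where
  "yoneda C Z = (qext C Z, \<lambda>X. if X \<in> qob C then qhom C X Z else {})"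

definition total :: "('o, 'b) cat \<Rightarrow> ('c, 'o, 'b) qcat \<Rightarrow> bool" where
  "total B C \<longleftrightarrow> (\<exists>F. qadjoint (Psh B C) C F (yoneda C))"

end

theory Submission
  imports Defs
begin

text \<open>A structured sink over T generates a presheaf on Ebar, namely the closure of its maps under
  precomposition with E-morphisms, and a test map g : T \<rightarrow> |Z| is an E-morphism on all of the sink
  iff it is one on all of the generated presheaf. Hence final liftings of a sink are exactly the
  suprema of the presheaf it generates, and every presheaf is generated by itself viewed as a sink.
  So E is topological iff every presheaf on Ebar has a supremum, which for any Q_B-category is
  equivalent to the Yoneda functor having a left adjoint: the left adjoint sends a presheaf to its
  supremum, and conversely the adjunction equation says that F phi is a supremum of phi.\<close>

lemma cat_comp_closed:
  "category B \<Longrightarrow> f \<in> hom B X Y \<Longrightarrow> g \<in> hom B Y Z \<Longrightarrow> Comp B g f \<in> hom B X Z"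
  unfolding category_def hom_def by auto

lemma cat_id_left: "category B \<Longrightarrow> f \<in> hom B X Y \<Longrightarrow> Comp B (Idt B Y) f = f"
  unfolding category_def hom_def by auto

lemma cat_id_right: "category B \<Longrightarrow> f \<in> hom B X Y \<Longrightarrow> Comp B f (Idt B X) = f"
  unfolding category_def hom_def by auto

lemma cat_id_in_hom: "category B \<Longrightarrow> X \<in> Obj B \<Longrightarrow> Idt B X \<in> hom B X X"
  unfolding category_def by auto

lemma cat_assoc:
  "category B \<Longrightarrow> f \<in> hom B X Y \<Longrightarrow> g \<in> hom B Y Z \<Longrightarrow> h \<in> hom B Z W
   \<Longrightarrow> Comp B h (Comp B g f) = Comp B (Comp B h g) f"
  unfolding category_def hom_def by auto

text \<open>The paper's condition that C(Y,Z) is the meet over X of C(X,Z) \<swarrow> phi_X says exactly that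
  C(Y,Z) is the hom of P C from phi to the Yoneda image of Z.\<close>
definition qsup :: "('o, 'b) cat \<Rightarrow> ('c, 'o, 'b) qcat \<Rightarrow> 'o \<Rightarrow> ('c \<Rightarrow> 'b set) \<Rightarrow> 'c \<Rightarrow> bool" where
  "qsup B C T \<phi> Y \<longleftrightarrow> Y \<in> qob C \<and> qext C Y = T \<and>
     (\<forall>Z \<in> qob C. qhom C Y Z = qhom (Psh B C) (T, \<phi>) (yoneda C Z))"

lemma qcat_hom_in_hom:
  "is_qcat B C \<Longrightarrow> X \<in> qob C \<Longrightarrow> Y \<in> qob C \<Longrightarrow> f \<in> qhom C X Y
   \<Longrightarrow> f \<in> hom B (qext C X) (qext C Y)"
  unfolding is_qcat_def by (elim conjE) (meson subsetD)

lemma qcat_id: "is_qcat B C \<Longrightarrow> X \<in> qob C \<Longrightarrow> Idt B (qext C X) \<in> qhom C X X"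
  unfolding is_qcat_def by (elim conjE) simp

lemma qcat_comp:
  assumes "is_qcat B C" and "X \<in> qob C" "Y \<in> qob C" "Z \<in> qob C"
    and "f \<in> qhom C X Y" and "g \<in> qhom C Y Z"
  shows "Comp B g f \<in> qhom C X Z"
proof -
  have "Comp B g f \<in> qcomp B (qhom C Y Z) (qhom C X Y)"
    using assms(5,6) unfolding qcomp_def by auto
  moreover have "\<forall>X \<in> qob C. \<forall>Y \<in> qob C. \<forall>Z \<in> qob C.
      qcomp B (qhom C Y Z) (qhom C X Y) \<subseteq> qhom C X Z"
    using assms(1) unfolding is_qcat_def by (elim conjE)
  ultimately show ?thesis using assms(2-4) by (meson subsetD)
qed

lemma presheaf_in_hom:
  "presheaf B C T \<phi> \<Longrightarrow> X \<in> qob C \<Longrightarrow> f \<in> \<phi> X \<Longrightarrow> f \<in> hom B (qext C X) T"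
  unfolding presheaf_def by (elim conjE) blast

lemma presheaf_off_qob: "presheaf B C T \<phi> \<Longrightarrow> X \<notin> qob C \<Longrightarrow> \<phi> X = {}"
  unfolding presheaf_def by (elim conjE) blast

lemma presheaf_comp:
  assumes "presheaf B C T \<phi>" and "X \<in> qob C" "X' \<in> qob C"
    and "f \<in> \<phi> X" and "k \<in> qhom C X' X"
  shows "Comp B f k \<in> \<phi> X'"
proof -
  have "Comp B f k \<in> qcomp B (\<phi> X) (qhom C X' X)"
    using assms(4,5) unfolding qcomp_def by auto
  moreover have "\<forall>X \<in> qob C. \<forall>X' \<in> qob C. qcomp B (\<phi> X) (qhom C X' X) \<subseteq> \<phi> X'"
    using assms(1) unfolding presheaf_def by (elim conjE)
  ultimately show ?thesis using assms(2,3) by blast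
qed

lemma Psh_hom_yoneda:
  "qhom (Psh B C) (T, \<phi>) (yoneda C Z) =
     {g \<in> hom B T (qext C Z). \<forall>X \<in> qob C. \<forall>f \<in> \<phi> X. Comp B g f \<in> qhom C X Z}"
  unfolding Psh_def yoneda_def qresid_def by auto

lemma presheaf_yoneda:
  assumes "is_qcat B C" and "Z \<in> qob C"
  shows "presheaf B C (qext C Z) (snd (yoneda C Z))"
  using assms unfolding is_qcat_def presheaf_def yoneda_def by auto

lemma yoneda_qfunctor:
  assumes C: "is_qcat B C"
  shows "qfunctor C (Psh B C) (yoneda C)"
  unfolding qfunctor_def
proof (intro conjI ballI)
  fix X assume X: "X \<in> qob C"
  show "yoneda C X \<in> qob (Psh B C)"
    using presheaf_yoneda[OF C X] by (simp add: Psh_def yoneda_def)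
  show "qext (Psh B C) (yoneda C X) = qext C X"
    by (simp add: Psh_def yoneda_def)
next
  fix X Y assume X: "X \<in> qob C" and Y: "Y \<in> qob C"
  show "qhom C X Y \<subseteq> qhom (Psh B C) (yoneda C X) (yoneda C Y)"
  proof
    fix g assume g: "g \<in> qhom C X Y"
    have "g \<in> hom B (qext C X) (qext C Y)" using qcat_hom_in_hom[OF C X Y g] .
    moreover have "Comp B g f \<in> qhom C W Y" if "W \<in> qob C" "f \<in> qhom C W X" for W f
      using qcat_comp[OF C that(1) X Y that(2) g] .
    ultimately have "g \<in> qhom (Psh B C) (qext C X, snd (yoneda C X)) (yoneda C Y)"
      unfolding Psh_hom_yoneda by (simp add: yoneda_def)
    then show "g \<in> qhom (Psh B C) (yoneda C X) (yoneda C Y)" by (simp add: yoneda_def)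
  qed
qed

text \<open>A supremum is an upper bound (the unit of the adjunction): test its identity.\<close>
lemma presheaf_le_qsup:
  assumes B: "category B" and C: "is_qcat B C"
    and \<phi>: "presheaf B C T \<phi>" and Y: "qsup B C T \<phi> Y" and X: "X \<in> qob C"
  shows "\<phi> X \<subseteq> qhom C X Y"
proof
  fix f assume f: "f \<in> \<phi> X"
  have YC: "Y \<in> qob C" and YT: "qext C Y = T" using Y unfolding qsup_def by auto
  have "Idt B T \<in> qhom C Y Y" using qcat_id[OF C YC] YT by simp
  then have "Comp B (Idt B T) f \<in> qhom C X Y"
    using Y YC X f unfolding qsup_def Psh_hom_yoneda by auto
  moreover have "f \<in> hom B (qext C X) T" using presheaf_in_hom[OF \<phi> X f] .
  ultimately show "f \<in> qhom C X Y" using cat_id_left[OF B] by metis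
qed

lemma total_iff_qsup:
  assumes B: "category B" and C: "is_qcat B C"
  shows "total B C \<longleftrightarrow> (\<forall>T \<phi>. presheaf B C T \<phi> \<longrightarrow> (\<exists>Y. qsup B C T \<phi> Y))"
proof
  assume "total B C"
  then obtain F where F: "qadjoint (Psh B C) C F (yoneda C)" unfolding total_def by auto
  show "\<forall>T \<phi>. presheaf B C T \<phi> \<longrightarrow> (\<exists>Y. qsup B C T \<phi> Y)"
  proof (intro allI impI)
    fix T \<phi> assume "presheaf B C T \<phi>"
    then have "(T, \<phi>) \<in> qob (Psh B C)" by (simp add: Psh_def)
    then have "qsup B C T \<phi> (F (T, \<phi>))"
      using F unfolding qadjoint_def qfunctor_def qsup_def by (simp add: Psh_def)
    then show "\<exists>Y. qsup B C T \<phi> Y" ..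
  qed
next
  assume sup: "\<forall>T \<phi>. presheaf B C T \<phi> \<longrightarrow> (\<exists>Y. qsup B C T \<phi> Y)"
  define F where "F = (\<lambda>(T, \<phi>). SOME Y. qsup B C T \<phi> Y)"
  have F_sup: "qsup B C T \<phi> (F (T, \<phi>))" if "presheaf B C T \<phi>" for T \<phi>
    using sup that unfolding F_def by (auto intro: someI_ex)
  have F_mono: "qhom (Psh B C) (T, \<phi>) (T', \<psi>) \<subseteq> qhom C (F (T, \<phi>)) (F (T', \<psi>))"
    if \<phi>: "presheaf B C T \<phi>" and \<psi>: "presheaf B C T' \<psi>" for T \<phi> T' \<psi>
  proof -
    have Y': "F (T', \<psi>) \<in> qob C" "qext C (F (T', \<psi>)) = T'"
      using F_sup[OF \<psi>] unfolding qsup_def by auto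
    have "qhom (Psh B C) (T, \<phi>) (T', \<psi>) \<subseteq> qhom (Psh B C) (T, \<phi>) (yoneda C (F (T', \<psi>)))"
      using presheaf_le_qsup[OF B C \<psi> F_sup[OF \<psi>]] Y'
      unfolding Psh_hom_yoneda by (auto simp: Psh_def qresid_def)
    then show ?thesis using F_sup[OF \<phi>] Y'(1) unfolding qsup_def by simp
  qed
  have "qfunctor (Psh B C) C F"
    unfolding qfunctor_def
    using F_sup F_mono by (auto simp: Psh_def qsup_def)
  moreover have "\<forall>p \<in> qob (Psh B C). \<forall>Z \<in> qob C. qhom C (F p) Z = qhom (Psh B C) p (yoneda C Z)"
    using F_sup by (auto simp: Psh_def qsup_def)
  ultimately show "total B C"
    unfolding total_def qadjoint_def using yoneda_qfunctor[OF C] by blast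
qed

lemma concreteD:
  assumes "concrete B E Fo Fa"
  shows "category B" and "category E" and "functor E B Fo Fa"
  using assms unfolding concrete_def by auto

lemma emor_in_hom: "emor B E Fo Fa X Y f \<Longrightarrow> f \<in> hom B (Fo X) (Fo Y)"
  unfolding emor_def by auto

lemma emor_objs:
  assumes c: "concrete B E Fo Fa" and f: "emor B E Fo Fa X Y f"
  shows "X \<in> Obj E" and "Y \<in> Obj E"
proof -
  have "\<forall>f \<in> Arr E. Dom E f \<in> Obj E \<and> Cod E f \<in> Obj E"
    using concreteD(2)[OF c] unfolding category_def by (elim conjE)
  then show "X \<in> Obj E" and "Y \<in> Obj E"
    using f unfolding emor_def hom_def by auto
qed

lemma emor_comp:
  assumes c: "concrete B E Fo Fa" and f: "emor B E Fo Fa X Y f" and g: "emor B E Fo Fa Y Z g"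
  shows "emor B E Fo Fa X Z (Comp B g f)"
proof -
  note B = concreteD(1)[OF c] and E = concreteD(2)[OF c] and F = concreteD(3)[OF c]
  from f obtain f' where f': "f' \<in> hom E X Y" "Fa f' = f" unfolding emor_def by auto
  from g obtain g' where g': "g' \<in> hom E Y Z" "Fa g' = g" unfolding emor_def by auto
  have "Fa (Comp E g' f') = Comp B g f"
    using F f' g' unfolding functor_def hom_def by auto
  then show ?thesis
    using cat_comp_closed[OF E f'(1) g'(1)] cat_comp_closed[OF B emor_in_hom[OF f] emor_in_hom[OF g]]
    unfolding emor_def by blast
qed

lemma emor_id:
  assumes c: "concrete B E Fo Fa" and X: "X \<in> Obj E"
  shows "emor B E Fo Fa X X (Idt B (Fo X))"
proof -
  note B = concreteD(1)[OF c] and E = concreteD(2)[OF c] and F = concreteD(3)[OF c]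
  have "Fa (Idt E X) = Idt B (Fo X)" and "Fo X \<in> Obj B" using F X unfolding functor_def by auto
  then show ?thesis using cat_id_in_hom[OF E X] cat_id_in_hom[OF B] unfolding emor_def by blast
qed

lemma is_qcat_Ebar:
  assumes c: "concrete B E Fo Fa"
  shows "is_qcat B (Ebar B E Fo Fa)"
  unfolding is_qcat_def
proof (intro conjI ballI)
  fix X assume "X \<in> qob (Ebar B E Fo Fa)"
  then show "qext (Ebar B E Fo Fa) X \<in> Obj B"
    and "{Idt B (qext (Ebar B E Fo Fa) X)} \<subseteq> qhom (Ebar B E Fo Fa) X X"
    using concreteD(3)[OF c] emor_id[OF c] unfolding functor_def by (auto simp: Ebar_def)
next
  fix X Y show "qhom (Ebar B E Fo Fa) X Y
      \<subseteq> hom B (qext (Ebar B E Fo Fa) X) (qext (Ebar B E Fo Fa) Y)"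
    using emor_in_hom by (auto simp: Ebar_def)
next
  fix X Y Z
  show "qcomp B (qhom (Ebar B E Fo Fa) Y Z) (qhom (Ebar B E Fo Fa) X Y) \<subseteq> qhom (Ebar B E Fo Fa) X Z"
    using emor_comp[OF c] unfolding qcomp_def by (auto simp: Ebar_def)
qed

lemma qsup_Ebar_iff:
  "qsup B (Ebar B E Fo Fa) T \<phi> Y \<longleftrightarrow> Y \<in> Obj E \<and> Fo Y = T \<and>
     (\<forall>Z \<in> Obj E. \<forall>g. emor B E Fo Fa Y Z g \<longleftrightarrow>
        g \<in> hom B T (Fo Z) \<and> (\<forall>X \<in> Obj E. \<forall>f \<in> \<phi> X. emor B E Fo Fa X Z (Comp B g f)))"
  unfolding qsup_def Psh_hom_yoneda by (auto simp: Ebar_def)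

definition sink_closure ::
  "('o, 'b) cat \<Rightarrow> ('x, 'e) cat \<Rightarrow> ('x \<Rightarrow> 'o) \<Rightarrow> ('e \<Rightarrow> 'b) \<Rightarrow> ('x \<times> 'b) set \<Rightarrow> 'x \<Rightarrow> 'b set" where
  "sink_closure B E Fo Fa S X = {Comp B f h | f h. \<exists>X'. (X', f) \<in> S \<and> emor B E Fo Fa X X' h}"

lemma structured_sinkD:
  "structured_sink B E Fo T S \<Longrightarrow> (X, f) \<in> S \<Longrightarrow> X \<in> Obj E \<and> f \<in> hom B (Fo X) T"
  unfolding structured_sink_def by auto

lemma sink_in_closure:
  assumes c: "concrete B E Fo Fa" and S: "structured_sink B E Fo T S" and Xf: "(X, f) \<in> S"
  shows "f \<in> sink_closure B E Fo Fa S X"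
proof -
  have X: "X \<in> Obj E" and f: "f \<in> hom B (Fo X) T" using structured_sinkD[OF S Xf] by auto
  have "f = Comp B f (Idt B (Fo X))" using cat_id_right[OF concreteD(1)[OF c] f] by simp
  then show ?thesis
    using emor_id[OF c X] Xf unfolding sink_closure_def by blast
qed

lemma presheaf_sink_closure:
  assumes c: "concrete B E Fo Fa" and T: "T \<in> Obj B" and S: "structured_sink B E Fo T S"
  shows "presheaf B (Ebar B E Fo Fa) T (sink_closure B E Fo Fa S)"
  unfolding presheaf_def
proof (intro conjI ballI allI impI subsetI)
  show "T \<in> Obj B" by fact
  fix X u assume "u \<in> sink_closure B E Fo Fa S X"
  then obtain f h X' where u: "u = Comp B f h" and f: "(X', f) \<in> S" and h: "emor B E Fo Fa X X' h"
    unfolding sink_closure_def by auto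
  have "u \<in> hom B (Fo X) T"
    using u cat_comp_closed[OF concreteD(1)[OF c] emor_in_hom[OF h]] structured_sinkD[OF S f] by simp
  then show "u \<in> hom B (qext (Ebar B E Fo Fa) X) T" by (simp add: Ebar_def)
next
  fix X assume "X \<notin> qob (Ebar B E Fo Fa)"
  then show "sink_closure B E Fo Fa S X = {}"
    unfolding sink_closure_def using emor_objs[OF c] by (auto simp: Ebar_def)
next
  note B = concreteD(1)[OF c]
  fix X X' u assume "u \<in> qcomp B (sink_closure B E Fo Fa S X) (qhom (Ebar B E Fo Fa) X' X)"
  then obtain f h k X'' where u: "u = Comp B (Comp B f h) k" and f: "(X'', f) \<in> S"
    and h: "emor B E Fo Fa X X'' h" and k: "emor B E Fo Fa X' X k"
    unfolding qcomp_def sink_closure_def by (auto simp: Ebar_def)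
  have "f \<in> hom B (Fo X'') T" using structured_sinkD[OF S f] by simp
  then have "u = Comp B f (Comp B h k)"
    using u cat_assoc[OF B emor_in_hom[OF k] emor_in_hom[OF h]] by simp
  then show "u \<in> sink_closure B E Fo Fa S X'"
    using f emor_comp[OF c k h] unfolding sink_closure_def by blast
qed

lemma emor_on_sink_iff_on_closure:
  assumes c: "concrete B E Fo Fa" and S: "structured_sink B E Fo T S" and g: "g \<in> hom B T (Fo Z)"
  shows "(\<forall>(X, f) \<in> S. emor B E Fo Fa X Z (Comp B g f)) \<longleftrightarrow>
         (\<forall>X \<in> Obj E. \<forall>u \<in> sink_closure B E Fo Fa S X. emor B E Fo Fa X Z (Comp B g u))"
proof
  note B = concreteD(1)[OF c]
  assume on_sink: "\<forall>(X, f) \<in> S. emor B E Fo Fa X Z (Comp B g f)"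
  show "\<forall>X \<in> Obj E. \<forall>u \<in> sink_closure B E Fo Fa S X. emor B E Fo Fa X Z (Comp B g u)"
  proof (intro ballI)
    fix X u assume "u \<in> sink_closure B E Fo Fa S X"
    then obtain f h X' where u: "u = Comp B f h" and f: "(X', f) \<in> S" and h: "emor B E Fo Fa X X' h"
      unfolding sink_closure_def by auto
    have "Comp B g u = Comp B (Comp B g f) h"
      using u cat_assoc[OF B emor_in_hom[OF h] _ g] structured_sinkD[OF S f] by simp
    then show "emor B E Fo Fa X Z (Comp B g u)"
      using emor_comp[OF c h] on_sink f by auto
  qed
next
  assume "\<forall>X \<in> Obj E. \<forall>u \<in> sink_closure B E Fo Fa S X. emor B E Fo Fa X Z (Comp B g u)"
  then show "\<forall>(X, f) \<in> S. emor B E Fo Fa X Z (Comp B g f)"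
    using sink_in_closure[OF c S] structured_sinkD[OF S] by blast
qed

lemma final_lifting_iff_qsup:
  assumes c: "concrete B E Fo Fa" and S: "structured_sink B E Fo T S"
  shows "final_lifting B E Fo Fa T S Y \<longleftrightarrow> qsup B (Ebar B E Fo Fa) T (sink_closure B E Fo Fa S) Y"
proof
  assume "final_lifting B E Fo Fa T S Y"
  then have YE: "Y \<in> Obj E" and YT: "Fo Y = T" and lift: "\<forall>(X, f) \<in> S. emor B E Fo Fa X Y f"
    and univ: "\<And>Z g. Z \<in> Obj E \<Longrightarrow> g \<in> hom B T (Fo Z) \<Longrightarrow>
      \<forall>(X, f) \<in> S. emor B E Fo Fa X Z (Comp B g f) \<Longrightarrow> emor B E Fo Fa Y Z g"
    unfolding final_lifting_def by auto
  have "emor B E Fo Fa Y Z g \<longleftrightarrow> g \<in> hom B T (Fo Z) \<and>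
      (\<forall>X \<in> Obj E. \<forall>u \<in> sink_closure B E Fo Fa S X. emor B E Fo Fa X Z (Comp B g u))"
    if Z: "Z \<in> Obj E" for Z g
  proof
    assume g: "emor B E Fo Fa Y Z g"
    then have g_hom: "g \<in> hom B T (Fo Z)" using emor_in_hom YT by metis
    have "\<forall>(X, f) \<in> S. emor B E Fo Fa X Z (Comp B g f)" using lift emor_comp[OF c _ g] by blast
    then show "g \<in> hom B T (Fo Z) \<and>
        (\<forall>X \<in> Obj E. \<forall>u \<in> sink_closure B E Fo Fa S X. emor B E Fo Fa X Z (Comp B g u))"
      using emor_on_sink_iff_on_closure[OF c S g_hom] g_hom by blast
  next
    assume "g \<in> hom B T (Fo Z) \<and>
        (\<forall>X \<in> Obj E. \<forall>u \<in> sink_closure B E Fo Fa S X. emor B E Fo Fa X Z (Comp B g u))"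
    then show "emor B E Fo Fa Y Z g" using univ[OF Z] emor_on_sink_iff_on_closure[OF c S] by blast
  qed
  then show "qsup B (Ebar B E Fo Fa) T (sink_closure B E Fo Fa S) Y"
    using YE YT unfolding qsup_Ebar_iff by blast
next
  assume "qsup B (Ebar B E Fo Fa) T (sink_closure B E Fo Fa S) Y"
  then have YE: "Y \<in> Obj E" and YT: "Fo Y = T"
    and sup: "\<And>Z g. Z \<in> Obj E \<Longrightarrow> emor B E Fo Fa Y Z g \<longleftrightarrow> g \<in> hom B T (Fo Z) \<and>
      (\<forall>X \<in> Obj E. \<forall>u \<in> sink_closure B E Fo Fa S X. emor B E Fo Fa X Z (Comp B g u))"
    unfolding qsup_Ebar_iff by auto
  have "emor B E Fo Fa X Y f" if Xf: "(X, f) \<in> S" for X f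
  proof -
    have X: "X \<in> Obj E" and f: "f \<in> hom B (Fo X) T" using structured_sinkD[OF S Xf] by auto
    have "emor B E Fo Fa X Y (Comp B (Idt B T) f)"
      using sup[OF YE, of "Idt B T"] emor_id[OF c YE] YT sink_in_closure[OF c S Xf] X by auto
    then show ?thesis using cat_id_left[OF concreteD(1)[OF c] f] by simp
  qed
  moreover have "emor B E Fo Fa Y Z g"
    if "Z \<in> Obj E" "g \<in> hom B T (Fo Z)" "\<forall>(X, f) \<in> S. emor B E Fo Fa X Z (Comp B g f)" for Z g
    using sup[OF that(1)] emor_on_sink_iff_on_closure[OF c S that(2)] that(2,3) by blast
  ultimately show "final_lifting B E Fo Fa T S Y"
    using YE YT unfolding final_lifting_def by blast
qed

lemma sink_closure_graph:
  assumes c: "concrete B E Fo Fa" and \<phi>: "presheaf B (Ebar B E Fo Fa) T \<phi>"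
  shows "structured_sink B E Fo T {(X, f). f \<in> \<phi> X}"
    and "sink_closure B E Fo Fa {(X, f). f \<in> \<phi> X} = \<phi>"
proof -
  have "X \<in> Obj E \<and> f \<in> hom B (Fo X) T" if "f \<in> \<phi> X" for X f
    using presheaf_off_qob[OF \<phi>] presheaf_in_hom[OF \<phi>] that by (force simp: Ebar_def)
  then show S: "structured_sink B E Fo T {(X, f). f \<in> \<phi> X}"
    unfolding structured_sink_def by auto
  have "u \<in> \<phi> X" if u_in: "u \<in> sink_closure B E Fo Fa {(X, f). f \<in> \<phi> X} X" for X u
  proof -
    obtain f h X' where u: "u = Comp B f h" and f: "f \<in> \<phi> X'" and h: "emor B E Fo Fa X X' h"
      using u_in unfolding sink_closure_def by auto
    have "X \<in> qob (Ebar B E Fo Fa)" "X' \<in> qob (Ebar B E Fo Fa)" "h \<in> qhom (Ebar B E Fo Fa) X X'"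
      using emor_objs[OF c h] h by (simp_all add: Ebar_def)
    then show ?thesis using presheaf_comp[OF \<phi> _ _ f] u by blast
  qed
  moreover have "\<phi> X \<subseteq> sink_closure B E Fo Fa {(X, f). f \<in> \<phi> X} X" for X
    using sink_in_closure[OF c S] by auto
  ultimately show "sink_closure B E Fo Fa {(X, f). f \<in> \<phi> X} = \<phi>" by blast
qed

lemma topological_iff_qsup:
  assumes c: "concrete B E Fo Fa"
  shows "topological B E Fo Fa \<longleftrightarrow>
    (\<forall>T \<phi>. presheaf B (Ebar B E Fo Fa) T \<phi> \<longrightarrow> (\<exists>Y. qsup B (Ebar B E Fo Fa) T \<phi> Y))"
proof
  assume top: "topological B E Fo Fa"
  show "\<forall>T \<phi>. presheaf B (Ebar B E Fo Fa) T \<phi> \<longrightarrow> (\<exists>Y. qsup B (Ebar B E Fo Fa) T \<phi> Y)"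
  proof (intro allI impI)
    fix T \<phi> assume \<phi>: "presheaf B (Ebar B E Fo Fa) T \<phi>"
    then have "T \<in> Obj B" unfolding presheaf_def by auto
    then obtain Y where "final_lifting B E Fo Fa T {(X, f). f \<in> \<phi> X} Y"
      using top sink_closure_graph(1)[OF c \<phi>] unfolding topological_def by blast
    then show "\<exists>Y. qsup B (Ebar B E Fo Fa) T \<phi> Y"
      using final_lifting_iff_qsup[OF c sink_closure_graph(1)[OF c \<phi>]]
      unfolding sink_closure_graph(2)[OF c \<phi>] by blast
  qed
next
  assume "\<forall>T \<phi>. presheaf B (Ebar B E Fo Fa) T \<phi> \<longrightarrow> (\<exists>Y. qsup B (Ebar B E Fo Fa) T \<phi> Y)"
  then show "topological B E Fo Fa"
    using presheaf_sink_closure[OF c] final_lifting_iff_qsup[OF c]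
    unfolding topological_def by blast
qed

theorem theorem3p2:
  fixes B :: "('o, 'b) cat" and E :: "('x, 'e) cat"
    and Fo :: "'x \<Rightarrow> 'o" and Fa :: "'e \<Rightarrow> 'b"
  assumes "category B"
    and "concrete B E Fo Fa"
  shows "topological B E Fo Fa \<longleftrightarrow> total B (Ebar B E Fo Fa)"
  using topological_iff_qsup[OF assms(2)] total_iff_qsup[OF assms(1) is_qcat_Ebar[OF assms(2)]]
  by simp

end
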